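(* Let $H$ be the graph consisting of two vertex-disjoint triangles $v_1v_2v_3$ and $w_1w_2w_3$ together with the edge $v_3w_1$. Let $n\ge 7$ and let $G$ be a graph with $n$ vertices obtained from $H$ by attaching $n-6$ pendant edges (new leaves) to vertices of $H$, such that $v_3$ is incident with at least one pendant edge, $w_1$ is incident with no pendant edge, and at least one vertex of $\{v_1,v_2,w_2,w_3\}$ is incident with a pendant edge. Then $\operatorname{avm}(G)>\operatorname{avm}(T_n^1(3,3))$.
   Context: $\operatorname{avm}(G)$ is the average of $|M|$ over all maximal matchings $M$ of $G$ (a matching is maximal if not properly contained in another matching). $T_n^1(3,3)$ is the graph obtained from $H$ by attaching $n-6$ pendant edges (new leaves) to $v_3$. *)

theory Defs
  imports Complex_Main
begin

text \<open>Simple graphs are given by their edge sets: sets of 2-element vertex sets.\<close>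

definition matching :: "'a set set \<Rightarrow> 'a set set \<Rightarrow> bool" where
  "matching E M \<longleftrightarrow> M \<subseteq> E \<and> (\<forall>e\<in>M. \<forall>e'\<in>M. e \<noteq> e' \<longrightarrow> e \<inter> e' = {})"

definition maximal_matching :: "'a set set \<Rightarrow> 'a set set \<Rightarrow> bool" where
  "maximal_matching E M \<longleftrightarrow> matching E M \<and> (\<forall>M'. matching E M' \<and> M \<subseteq> M' \<longrightarrow> M' = M)"

definition avm :: "'a set set \<Rightarrow> real" where
  "avm E = (\<Sum>M\<in>{M. maximal_matching E M}. real (card M))
             / real (card {M. maximal_matching E M})"

text \<open>The graph H on vertices 0..5: v1=0, v2=1, v3=2, w1=3, w2=4, w3=5;
  triangles v1v2v3 and w1w2w3 plus the edge v3w1.\<close>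
definition H_edges :: "nat set set" where
  "H_edges = {{0,1},{1,2},{0,2},{3,4},{4,5},{3,5},{2,3}}"

text \<open>Graph on vertices 0..n-1 obtained from H by attaching, for each
  i with 6 \<le> i < n, the new leaf i to the vertex p i of H.\<close>
definition pendant_graph :: "nat \<Rightarrow> (nat \<Rightarrow> nat) \<Rightarrow> nat set set" where
  "pendant_graph n p = H_edges \<union> {{i, p i} | i. 6 \<le> i \<and> i < n}"

text \<open>T_n^1(3,3): all n-6 pendant edges attached to v3.\<close>
definition T1_33 :: "nat \<Rightarrow> nat set set" where
  "T1_33 n = pendant_graph n (\<lambda>_. 2)"

end

theory Submission
  imports Defs "HOL-Library.FuncSet"
begin

(* A maximal matching of G restricts to a matching m of H such that every edge of H meets
   a vertex covered by m or a vertex of the set P of vertices carrying leaves; conversely,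
   such an m becomes a maximal matching of G when each vertex of P left uncovered by m is
   matched to one of its leaves, chosen freely. Counting these extensions writes the number
   and the total size of the maximal matchings of G as polynomials in the leaf numbers a_v,
   and gives avm(T_n^1(3,3)) = (9k+15)/(3k+7) < 3 with k = n - 6. If v1 and v2 both carry
   leaves, every maximal matching of G has at least three edges, so avm(G) >= 3. In the
   remaining eleven cases the polynomial inequality is checked with all a_v >= 1. *)

section \<open>Maximal matchings\<close>

lemma matching_disjoint:
  "matching E M \<Longrightarrow> e \<in> M \<Longrightarrow> e' \<in> M \<Longrightarrow> e \<noteq> e' \<Longrightarrow> e \<inter> e' = {}"
  unfolding matching_def by simp

lemma matching_Un:
  assumes A: "matching E A" and B: "matching E B" and disj: "\<Union>A \<inter> \<Union>B = {}"
  shows "matching E (A \<union> B)"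
  unfolding matching_def
proof (intro conjI ballI impI)
  show "A \<union> B \<subseteq> E" using A B unfolding matching_def by simp
next
  have cross: "e \<inter> e' = {}" if "e \<in> A" "e' \<in> B" for e e' using that disj by blast
  fix e e' assume "e \<in> A \<union> B" "e' \<in> A \<union> B" "e \<noteq> e'"
  then consider "e \<in> A" "e' \<in> A" | "e \<in> B" "e' \<in> B" | "e \<in> A" "e' \<in> B" | "e \<in> B" "e' \<in> A"
    by blast
  then show "e \<inter> e' = {}"
    by cases
      (use \<open>e \<noteq> e'\<close> matching_disjoint[OF A] matching_disjoint[OF B] cross
        in \<open>metis Int_commute\<close>)+
qed

lemma maximal_matching_iff_covers:
  assumes "{} \<notin> E"
  shows "maximal_matching E M \<longleftrightarrow> matching E M \<and> (\<forall>e\<in>E. e \<inter> \<Union>M \<noteq> {})"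
proof
  assume max: "maximal_matching E M"
  then have M: "matching E M" by (simp add: maximal_matching_def)
  have "e \<inter> \<Union>M \<noteq> {}" if "e \<in> E" for e
  proof
    assume disj: "e \<inter> \<Union>M = {}"
    then have "matching E (insert e M)" using M \<open>e \<in> E\<close> unfolding matching_def by blast
    then have "e \<in> M" using max unfolding maximal_matching_def by blast
    then have "e = {}" using disj by blast
    then show False using assms \<open>e \<in> E\<close> by simp
  qed
  with M show "matching E M \<and> (\<forall>e\<in>E. e \<inter> \<Union>M \<noteq> {})" by blast
next
  assume "matching E M \<and> (\<forall>e\<in>E. e \<inter> \<Union>M \<noteq> {})"
  then have M: "matching E M" and covers: "\<And>e. e \<in> E \<Longrightarrow> e \<inter> \<Union>M \<noteq> {}" by blast+
  show "maximal_matching E M" unfolding maximal_matching_def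
  proof (intro conjI allI impI M)
    fix M' assume M': "matching E M' \<and> M \<subseteq> M'"
    show "M' = M"
    proof (rule ccontr)
      assume "M' \<noteq> M"
      then obtain e where e: "e \<in> M'" "e \<notin> M" using M' by blast
      then have "e \<in> E" using M' unfolding matching_def by blast
      then obtain f where f: "f \<in> M" "e \<inter> f \<noteq> {}" using covers by blast
      have "f \<in> M'" "e \<noteq> f" using f(1) M' e(2) by auto
      then show False using matching_disjoint[of E M' e f] M' e(1) f(2) by blast
    qed
  qed
qed

lemma maximal_matching_subset: "maximal_matching E M \<Longrightarrow> M \<subseteq> E"
  unfolding maximal_matching_def matching_def by blast

lemma maximal_matching_meets_edge:
  assumes "{} \<notin> E" "maximal_matching E M" "e \<in> E"
  obtains f x where "f \<in> M" "x \<in> f" "x \<in> e"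
proof -
  have "e \<inter> \<Union>M \<noteq> {}" using assms maximal_matching_iff_covers by blast
  then show ?thesis using that by blast
qed

section \<open>Maximal matchings of H with pendant leaves\<close>

lemma H_edge_subset: "e \<in> H_edges \<Longrightarrow> e \<subseteq> {0..5}"
  unfolding H_edges_def by auto

lemma empty_notin_pendant_graph: "{} \<notin> pendant_graph n p"
  unfolding pendant_graph_def H_edges_def by auto

lemma pendant_edge_in_graph: "i \<in> {6..<n} \<Longrightarrow> {i, p i} \<in> pendant_graph n p"
  unfolding pendant_graph_def by auto

lemma pendant_graph_cases:
  assumes "e \<in> pendant_graph n p"
  obtains "e \<in> H_edges" | i where "i \<in> {6..<n}" "e = {i, p i}"
  using assms unfolding pendant_graph_def by auto

definition leaves :: "nat \<Rightarrow> (nat \<Rightarrow> nat) \<Rightarrow> nat \<Rightarrow> nat set" where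
  "leaves n p v = {i \<in> {6..<n}. p i = v}"

definition admissible :: "nat set \<Rightarrow> nat set set \<Rightarrow> bool" where
  "admissible P m \<longleftrightarrow> matching H_edges m \<and> (\<forall>e\<in>H_edges. e \<inter> (\<Union>m \<union> P) \<noteq> {})"

fun attach_leaves :: "nat set \<Rightarrow> nat set set \<times> (nat \<Rightarrow> nat) \<Rightarrow> nat set set" where
  "attach_leaves P (m, g) = m \<union> (\<lambda>v. {g v, v}) ` (P - \<Union>m)"

definition leaf_choices :: "nat \<Rightarrow> (nat \<Rightarrow> nat) \<Rightarrow> (nat set set \<times> (nat \<Rightarrow> nat)) set" where
  "leaf_choices n p =
     (SIGMA m:{m. admissible (p ` {6..<n}) m}. \<Pi>\<^sub>E v\<in>p ` {6..<n} - \<Union>m. leaves n p v)"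

definition matching_count :: "nat set \<Rightarrow> (nat \<Rightarrow> nat) \<Rightarrow> nat" where
  "matching_count P a = (\<Sum>m | admissible P m. \<Prod>v\<in>P - \<Union>m. a v)"

definition matching_size_sum :: "nat set \<Rightarrow> (nat \<Rightarrow> nat) \<Rightarrow> nat" where
  "matching_size_sum P a =
     (\<Sum>m | admissible P m. (card m + card (P - \<Union>m)) * (\<Prod>v\<in>P - \<Union>m. a v))"

lemma admissible_subset_H_edges: "admissible P m \<Longrightarrow> m \<subseteq> H_edges"
  unfolding admissible_def matching_def by blast

lemma finite_admissible: "finite {m. admissible P m}"
proof (rule finite_subset)
  show "{m. admissible P m} \<subseteq> Pow H_edges" using admissible_subset_H_edges by blast
  show "finite (Pow H_edges)" unfolding finite_Pow_iff H_edges_def by simp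
qed

lemma finite_leaves: "finite (leaves n p v)"
  unfolding leaves_def by simp

lemma sum_card_leaves: "(\<Sum>v\<in>p ` {6..<n}. card (leaves n p v)) = n - 6"
proof -
  have "(\<Sum>v\<in>p ` {6..<n}. card (leaves n p v)) = card (\<Union>v\<in>p ` {6..<n}. leaves n p v)"
    by (rule card_UN_disjoint[symmetric]) (auto simp: finite_leaves leaves_def)
  also have "(\<Union>v\<in>p ` {6..<n}. leaves n p v) = {6..<n}" unfolding leaves_def by auto
  finally show ?thesis by simp
qed

context
  fixes n :: nat and p :: "nat \<Rightarrow> nat"
  assumes attached: "p ` {6..<n} \<subseteq> {0..5}"
begin

lemma parent_le_5: "i \<in> {6..<n} \<Longrightarrow> p i \<le> 5"
  using attached by (auto simp: image_subset_iff)

lemma leaf_choicesD: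
  assumes "(m, g) \<in> leaf_choices n p" "v \<in> p ` {6..<n} - \<Union>m"
  shows "g v \<in> {6..<n}" "p (g v) = v" "v \<le> 5"
proof -
  have "g v \<in> leaves n p v" using assms unfolding leaf_choices_def by (simp add: PiE_iff)
  then show "g v \<in> {6..<n}" "p (g v) = v" unfolding leaves_def by auto
  show "v \<le> 5" using assms(2) attached by auto
qed

lemma matching_leaf_edges:
  assumes mg: "(m, g) \<in> leaf_choices n p"
  shows "matching (pendant_graph n p) ((\<lambda>v. {g v, v}) ` (p ` {6..<n} - \<Union>m))"
proof -
  define Q where "Q = p ` {6..<n} - \<Union>m"
  note g = leaf_choicesD[OF mg, folded Q_def]
  have edges: "{g v, v} \<in> pendant_graph n p" if "v \<in> Q" for v
    using pendant_edge_in_graph[where p = p, OF g(1)[OF that]] g(2)[OF that] by simp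
  have disjoint: "{g u, u} \<inter> {g v, v} = {}" if "u \<in> Q" "v \<in> Q" "u \<noteq> v" for u v
    using g[OF that(1)] g[OF that(2)] that(3) by auto
  show ?thesis
    unfolding matching_def Q_def[symmetric]
  proof (intro conjI image_subsetI ballI impI)
    fix e e' assume "e \<in> (\<lambda>v. {g v, v}) ` Q" "e' \<in> (\<lambda>v. {g v, v}) ` Q" "e \<noteq> e'"
    then obtain u v where "u \<in> Q" "v \<in> Q" "u \<noteq> v" "e = {g u, u}" "e' = {g v, v}" by auto
    then show "e \<inter> e' = {}" using disjoint by simp
  qed (rule edges)
qed

lemma attach_leaves_maximal:
  assumes mg: "(m, g) \<in> leaf_choices n p"
  shows "maximal_matching (pendant_graph n p) (attach_leaves (p ` {6..<n}) (m, g))"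
proof -
  define P where "P = p ` {6..<n}"
  define L where "L = (\<lambda>v. {g v, v}) ` (P - \<Union>m)"
  have adm: "admissible P m" using mg unfolding leaf_choices_def P_def by simp
  have "matching (pendant_graph n p) m"
    using adm unfolding admissible_def matching_def pendant_graph_def by blast
  moreover have "matching (pendant_graph n p) L"
    using matching_leaf_edges[OF mg] unfolding L_def P_def .
  moreover have "\<Union>m \<inter> \<Union>L = {}"
  proof -
    have "\<Union>L \<subseteq> (P - \<Union>m) \<union> {6..<n}"
      using leaf_choicesD(1)[OF mg] unfolding L_def P_def by blast
    moreover have "\<Union>m \<subseteq> {0..5}"
      using H_edge_subset admissible_subset_H_edges[OF adm] by (meson Union_least subsetD)
    moreover have "{6..<n} \<inter> {0..5} = {}" by auto
    ultimately show ?thesis by blast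
  qed
  ultimately have matching: "matching (pendant_graph n p) (m \<union> L)" by (rule matching_Un)
  have covers: "e \<inter> \<Union>(m \<union> L) \<noteq> {}" if "e \<in> pendant_graph n p" for e
  proof -
    have "e \<inter> (\<Union>m \<union> P) \<noteq> {}"
      using that
    proof (cases rule: pendant_graph_cases)
      case 1
      then show ?thesis using adm unfolding admissible_def by blast
    qed (auto simp: P_def)
    moreover have "P - \<Union>m \<subseteq> \<Union>L" unfolding L_def by blast
    ultimately show ?thesis by blast
  qed
  have attach: "attach_leaves (p ` {6..<n}) (m, g) = m \<union> L" unfolding P_def L_def by simp
  show ?thesis
    unfolding attach maximal_matching_iff_covers[OF empty_notin_pendant_graph]
    using matching covers by blast
qed

lemma leaf_edge_notin_H:
  assumes "(m, g) \<in> leaf_choices n p" "v \<in> p ` {6..<n} - \<Union>m"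
  shows "{g v, v} \<notin> H_edges"
  using leaf_choicesD(1)[OF assms] H_edge_subset by fastforce

lemma attach_leaves_Int_H_edges:
  assumes "(m, g) \<in> leaf_choices n p"
  shows "attach_leaves (p ` {6..<n}) (m, g) \<inter> H_edges = m"
proof -
  have "m \<subseteq> H_edges"
    using assms admissible_subset_H_edges unfolding leaf_choices_def by blast
  then show ?thesis using leaf_edge_notin_H[OF assms] by auto
qed

lemma attach_leaves_inj: "inj_on (attach_leaves (p ` {6..<n})) (leaf_choices n p)"
proof (rule inj_onI)
  fix x y assume x: "x \<in> leaf_choices n p" and y: "y \<in> leaf_choices n p"
    and eq: "attach_leaves (p ` {6..<n}) x = attach_leaves (p ` {6..<n}) y"
  obtain m g m' g' where xy: "x = (m, g)" "y = (m', g')" by fastforce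
  have "m' = m" using attach_leaves_Int_H_edges x y eq unfolding xy by metis
  define Q where "Q = p ` {6..<n} - \<Union>m"
  have "g = g'"
  proof (rule PiE_ext)
    show "g \<in> Pi\<^sub>E Q (leaves n p)" "g' \<in> Pi\<^sub>E Q (leaves n p)"
      using x y \<open>m' = m\<close> unfolding xy leaf_choices_def Q_def by auto
    fix v assume v: "v \<in> Q"
    show "g v = g' v"
    proof -
      have "{g v, v} \<in> attach_leaves (p ` {6..<n}) (m', g')"
        using eq v unfolding xy Q_def by auto
      moreover have "{g v, v} \<notin> m'"
        using leaf_edge_notin_H[OF x[unfolded xy] v[unfolded Q_def]]
          attach_leaves_Int_H_edges[OF y[unfolded xy]]
        by blast
      ultimately obtain u where u: "u \<in> Q" "{g v, v} = {g' u, u}"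
        using \<open>m' = m\<close> by (auto simp: Q_def)
      show ?thesis
        using u leaf_choicesD[OF x[unfolded xy] v[unfolded Q_def]]
          leaf_choicesD[OF y[unfolded xy \<open>m' = m\<close>] u(1)[unfolded Q_def]]
        by (auto simp: doubleton_eq_iff)
    qed
  qed
  then show "x = y" unfolding xy \<open>m' = m\<close> by simp
qed

lemma maximal_matching_leaf_edge:
  assumes M: "maximal_matching (pendant_graph n p) M"
    and v: "v \<in> p ` {6..<n} - \<Union>(M \<inter> H_edges)"
  obtains j where "j \<in> leaves n p v" "{j, v} \<in> M"
proof -
  obtain i where i: "i \<in> {6..<n}" "v = p i" using v by blast
  have "{i, v} \<in> pendant_graph n p" using pendant_edge_in_graph[OF i(1)] i(2) by simp
  then obtain f x where f: "f \<in> M" "x \<in> f" "x \<in> {i, v}"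
    by (rule maximal_matching_meets_edge[OF empty_notin_pendant_graph M])
  have "f \<in> pendant_graph n p" using maximal_matching_subset[OF M] f(1) by blast
  then show ?thesis
  proof (cases rule: pendant_graph_cases)
    case 1
    then have "x \<noteq> v" using f v by blast
    moreover have "x \<noteq> i" using 1 f(2) H_edge_subset i(1) by fastforce
    ultimately show ?thesis using f(3) by blast
  next
    case (2 j)
    have "v \<le> 5" "p j \<le> 5" using parent_le_5 i 2(1) by auto
    then have "p j = v" using f(2,3) i 2 by auto
    then show ?thesis using that[of j] 2 f(1) unfolding leaves_def by simp
  qed
qed

lemma maximal_matching_restrict_admissible:
  assumes M: "maximal_matching (pendant_graph n p) M"
  shows "admissible (p ` {6..<n}) (M \<inter> H_edges)"
  unfolding admissible_def
proof
  have "matching (pendant_graph n p) M" using M by (simp add: maximal_matching_def)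
  then show "matching H_edges (M \<inter> H_edges)" unfolding matching_def by blast
next
  show "\<forall>e\<in>H_edges. e \<inter> (\<Union>(M \<inter> H_edges) \<union> p ` {6..<n}) \<noteq> {}"
  proof
    fix e assume e: "e \<in> H_edges"
    then have "e \<in> pendant_graph n p" unfolding pendant_graph_def by blast
    then obtain f x where f: "f \<in> M" "x \<in> f" "x \<in> e"
      by (rule maximal_matching_meets_edge[OF empty_notin_pendant_graph M])
    have "f \<in> pendant_graph n p" using maximal_matching_subset[OF M] f(1) by blast
    then show "e \<inter> (\<Union>(M \<inter> H_edges) \<union> p ` {6..<n}) \<noteq> {}"
    proof (cases rule: pendant_graph_cases)
      case 1
      then show ?thesis using f by blast
    next
      case (2 j)
      then have "x = p j" using f(2,3) e H_edge_subset by fastforce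
      then show ?thesis using 2(1) f(3) by blast
    qed
  qed
qed

lemma attach_leaves_surj:
  assumes M: "maximal_matching (pendant_graph n p) M"
  shows "M \<in> attach_leaves (p ` {6..<n}) ` leaf_choices n p"
proof -
  define P where "P = p ` {6..<n}"
  define m where "m = M \<inter> H_edges"
  define g where "g = (\<lambda>v\<in>P - \<Union>m. SOME j. j \<in> leaves n p v \<and> {j, v} \<in> M)"
  have Mm: "matching (pendant_graph n p) M" using M by (simp add: maximal_matching_def)
  have g: "g v \<in> leaves n p v \<and> {g v, v} \<in> M" if v: "v \<in> P - \<Union>m" for v
  proof -
    obtain j where "j \<in> leaves n p v" "{j, v} \<in> M"
      by (rule maximal_matching_leaf_edge[OF M v[unfolded P_def m_def]])
    then have "\<exists>j. j \<in> leaves n p v \<and> {j, v} \<in> M" by blast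
    from someI_ex[OF this] show ?thesis using v unfolding g_def by simp
  qed
  have "g \<in> Pi\<^sub>E (P - \<Union>m) (leaves n p)"
    by (rule PiE_I) (use g in \<open>auto simp: g_def\<close>)
  then have choice: "(m, g) \<in> leaf_choices n p"
    using maximal_matching_restrict_admissible[OF M]
    unfolding leaf_choices_def P_def m_def by simp
  have "f \<in> attach_leaves P (m, g)" if f: "f \<in> M" for f
  proof (cases "f \<in> H_edges")
    case False
    have "f \<in> pendant_graph n p" using Mm f unfolding matching_def by blast
    then obtain j where j: "j \<in> {6..<n}" "f = {j, p j}"
      using False by (auto elim: pendant_graph_cases)
    have same: "f' = f" if "f' \<in> M" "p j \<in> f'" for f'
      using matching_disjoint[OF Mm that(1) f] that(2) j(2) by blast
    have "p j \<notin> \<Union>m" using same False unfolding m_def by blast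
    then have v: "p j \<in> P - \<Union>m" using j(1) unfolding P_def by blast
    then have "{g (p j), p j} = f" using same g by blast
    then show ?thesis using v by auto
  qed (simp add: f m_def)
  moreover have "attach_leaves P (m, g) \<subseteq> M" using g unfolding m_def by auto
  ultimately have "M = attach_leaves P (m, g)" by blast
  then show ?thesis using choice unfolding P_def by blast
qed

lemma attach_leaves_bij:
  "bij_betw (attach_leaves (p ` {6..<n})) (leaf_choices n p)
     {M. maximal_matching (pendant_graph n p) M}"
  unfolding bij_betw_def
  using attach_leaves_inj attach_leaves_maximal attach_leaves_surj by auto

lemma card_attach_leaves:
  assumes mg: "(m, g) \<in> leaf_choices n p"
  shows "card (attach_leaves (p ` {6..<n}) (m, g)) = card m + card (p ` {6..<n} - \<Union>m)"
proof -
  define Q where "Q = p ` {6..<n} - \<Union>m"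
  have "m \<subseteq> H_edges" using mg admissible_subset_H_edges unfolding leaf_choices_def by blast
  then have "finite m" by (rule finite_subset) (simp add: H_edges_def)
  moreover have "m \<inter> (\<lambda>v. {g v, v}) ` Q = {}"
  proof -
    have "{g v, v} \<notin> m" if "v \<in> Q" for v
      using \<open>m \<subseteq> H_edges\<close> leaf_edge_notin_H[OF mg that[unfolded Q_def]] by blast
    then show ?thesis by auto
  qed
  moreover have "inj_on (\<lambda>v. {g v, v}) Q"
  proof (rule inj_onI)
    fix u v assume u: "u \<in> Q" and v: "v \<in> Q" and eq: "{g u, u} = {g v, v}"
    have "g u \<noteq> v" "u \<noteq> g v"
      using leaf_choicesD(1,3)[OF mg u[unfolded Q_def]]
        leaf_choicesD(1,3)[OF mg v[unfolded Q_def]]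
      by auto
    then show "u = v" using eq by (auto simp: doubleton_eq_iff)
  qed
  ultimately show ?thesis
    unfolding attach_leaves.simps Q_def[symmetric]
    by (simp add: card_Un_disjoint card_image Q_def)
qed

lemma card_maximal_matchings:
  "card {M. maximal_matching (pendant_graph n p) M}
     = matching_count (p ` {6..<n}) (\<lambda>v. card (leaves n p v))"
proof -
  have "card {M. maximal_matching (pendant_graph n p) M} = card (leaf_choices n p)"
    using bij_betw_same_card[OF attach_leaves_bij] by simp
  also have "\<dots> = matching_count (p ` {6..<n}) (\<lambda>v. card (leaves n p v))"
    unfolding leaf_choices_def matching_count_def
    by (simp add: card_PiE finite_PiE finite_admissible finite_leaves)
  finally show ?thesis .
qed

lemma sum_card_maximal_matchings:
  "(\<Sum>M | maximal_matching (pendant_graph n p) M. card M)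
     = matching_size_sum (p ` {6..<n}) (\<lambda>v. card (leaves n p v))"
proof -
  define P where "P = p ` {6..<n}"
  have "(\<Sum>M | maximal_matching (pendant_graph n p) M. card M)
      = (\<Sum>x\<in>leaf_choices n p. card (attach_leaves P x))"
    using sum.reindex_bij_betw[OF attach_leaves_bij, of card] unfolding P_def by simp
  also have "\<dots> = (\<Sum>m | admissible P m.
                        \<Sum>g\<in>Pi\<^sub>E (P - \<Union>m) (leaves n p). card m + card (P - \<Union>m))"
    unfolding leaf_choices_def P_def[symmetric]
    by (subst sum.Sigma)
      (auto simp: finite_admissible finite_PiE finite_leaves P_def leaf_choices_def
        intro!: sum.cong card_attach_leaves)
  also have "\<dots> = matching_size_sum P (\<lambda>v. card (leaves n p v))"
    unfolding matching_size_sum_def by (simp add: card_PiE mult.commute P_def)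
  finally show ?thesis unfolding P_def .
qed

lemma avm_pendant_graph:
  "avm (pendant_graph n p)
     = real (matching_size_sum (p ` {6..<n}) (\<lambda>v. card (leaves n p v)))
       / real (matching_count (p ` {6..<n}) (\<lambda>v. card (leaves n p v)))"
  unfolding avm_def card_maximal_matchings[symmetric] sum_card_maximal_matchings[symmetric]
  by simp

end

section \<open>Comparison with \<open>T\<^sub>n\<^sup>1(3,3)\<close>\<close>

definition H_matchings :: "nat set set list" where
  "H_matchings =
     [{}, {{0,1}}, {{1,2}}, {{0,2}}, {{3,4}}, {{4,5}}, {{3,5}}, {{2,3}},
      {{0,1},{3,4}}, {{0,1},{4,5}}, {{0,1},{3,5}}, {{1,2},{3,4}}, {{1,2},{4,5}}, {{1,2},{3,5}},
      {{0,2},{3,4}}, {{0,2},{4,5}}, {{0,2},{3,5}}, {{0,1},{2,3}}, {{4,5},{2,3}}, {{0,1},{4,5},{2,3}}]"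

lemma set_H_matchings: "set H_matchings = {m. matching H_edges m}"
proof -
  have "Set.filter (matching H_edges) (Pow H_edges) = set H_matchings"
    by code_simp
  then show ?thesis unfolding matching_def by auto
qed

lemma distinct_H_matchings: "distinct H_matchings"
  by code_simp

lemma Collect_admissible_eq: "{m. admissible P m} = set (filter (admissible P) H_matchings)"
  using set_H_matchings unfolding admissible_def by auto

lemma matching_count_list:
  "matching_count P a = (\<Sum>m\<leftarrow>filter (admissible P) H_matchings. \<Prod>v\<in>P - \<Union>m. a v)"
  unfolding matching_count_def Collect_admissible_eq
  by (simp add: sum_list_distinct_conv_sum_set distinct_H_matchings)

lemma matching_size_sum_list:
  "matching_size_sum P a
     = (\<Sum>m\<leftarrow>filter (admissible P) H_matchings.
          (card m + card (P - \<Union>m)) * (\<Prod>v\<in>P - \<Union>m. a v))"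
  unfolding matching_size_sum_def Collect_admissible_eq
  by (simp add: sum_list_distinct_conv_sum_set distinct_H_matchings)

lemma matching_count_pos:
  assumes "P \<subseteq> {0..5}"
  shows "0 < matching_count P a"
proof -
  define m :: "nat set set" where "m = {{0,1},{2,3},{4,5}}"
  have "admissible P m" unfolding m_def admissible_def matching_def H_edges_def by auto
  moreover have "P - \<Union>m = {}" using assms unfolding m_def by auto
  ultimately have "(\<Prod>v\<in>P - \<Union>m. a v) \<le> matching_count P a"
    unfolding matching_count_def by (intro member_le_sum finite_admissible) auto
  then show ?thesis using \<open>P - \<Union>m = {}\<close> by simp
qed

lemma matching_count_T1_33: "matching_count {2} a = 3 * a 2 + 7"
  unfolding matching_count_list by (code_simp; simp)

lemma matching_size_sum_T1_33: "matching_size_sum {2} a = 9 * a 2 + 15"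
  unfolding matching_size_sum_list by (code_simp; simp)

lemma avm_T1_33:
  assumes "7 \<le> n"
  shows "avm (T1_33 n) = real (9 * (n - 6) + 15) / real (3 * (n - 6) + 7)"
proof -
  have P: "(\<lambda>_. 2) ` {6..<n} = {2::nat}" using assms by (simp add: image_constant_conv)
  have "leaves n (\<lambda>_. 2) 2 = {6..<n}" unfolding leaves_def by auto
  then show ?thesis
    using avm_pendant_graph[where n = n and p = "\<lambda>_. 2"] unfolding T1_33_def P
    by (simp add: matching_count_T1_33 matching_size_sum_T1_33)
qed

(* For N = matching_count P a, S = matching_size_sum P a and k = sum a P this is
   S / N > (9k + 15) / (3k + 7), i.e. avm(G) > avm(T_n^1(3,3)), with denominators cleared. *)
definition exceeds_T1_33 :: "nat set \<Rightarrow> (nat \<Rightarrow> nat) \<Rightarrow> bool" where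
  "exceeds_T1_33 P a \<longleftrightarrow>
     (9 * sum a P + 15) * matching_count P a < matching_size_sum P a * (3 * sum a P + 7)"

lemma exceeds_T1_33_cong:
  assumes "\<And>v. v \<in> P \<Longrightarrow> a v = a' v"
  shows "exceeds_T1_33 P a \<longleftrightarrow> exceeds_T1_33 P a'"
proof -
  have "(\<Prod>v\<in>P - \<Union>m. a v) = (\<Prod>v\<in>P - \<Union>m. a' v)" for m
    using assms by (intro prod.cong) auto
  moreover have "sum a P = sum a' P" using assms by (rule sum.cong[OF refl])
  ultimately show ?thesis
    unfolding exceeds_T1_33_def matching_count_def matching_size_sum_def by simp
qed

lemma exceeds_T1_33_if_sizes_ge_3:
  assumes sizes: "\<And>m. admissible P m \<Longrightarrow> 3 \<le> card m + card (P - \<Union>m)"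
    and pos: "0 < matching_count P a"
  shows "exceeds_T1_33 P a"
proof -
  let ?k = "sum a P"
  have "3 * matching_count P a \<le> matching_size_sum P a"
    unfolding matching_count_def matching_size_sum_def sum_distrib_left
    by (rule sum_mono) (simp add: sizes mult.assoc[symmetric] mult_right_mono)
  then have "3 * matching_count P a * (3 * ?k + 7) \<le> matching_size_sum P a * (3 * ?k + 7)"
    by (rule mult_right_mono) simp
  moreover have "(9 * ?k + 15) * matching_count P a < 3 * matching_count P a * (3 * ?k + 7)"
    using pos by (simp add: algebra_simps)
  ultimately show ?thesis unfolding exceeds_T1_33_def by linarith
qed

lemma admissible_size_ge_3:
  assumes "0 \<in> P" "1 \<in> P" "2 \<in> P" "P \<subseteq> {0,1,2,4,5}" "admissible P m"
  shows "3 \<le> card m + card (P - \<Union>m)"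
proof -
  (* Written as {0,1,2,4,5} \<inter> P, the set P becomes explicit in each case of the membership
     split, and the statement is then closed and evaluated by code_simp. *)
  have "\<forall>m\<in>set H_matchings. admissible ({0,1,2,4,5} \<inter> P) m
          \<longrightarrow> 3 \<le> card m + card ({0,1,2,4,5} \<inter> P - \<Union>m)"
    using assms(1-3)
    by (cases "4 \<in> P"; cases "5 \<in> P"; simp only: Int_insert_left if_True if_False Int_empty_left;
        code_simp)
  moreover have "{0,1,2,4,5} \<inter> P = P" using assms(4) by blast
  moreover have "m \<in> set H_matchings"
    using assms(5) set_H_matchings unfolding admissible_def by blast
  ultimately show ?thesis using assms(5) by simp
qed

(* Same case split as in admissible_size_ge_3; with a = Suc \<circ> b, which builds in a_v \<ge> 1,
   both sides become polynomials in b that simp compares after normalisation. *)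
lemma exceeds_T1_33_eleven_cases:
  fixes b :: "nat \<Rightarrow> nat"
  assumes "2 \<in> P" "0 \<notin> P \<or> 1 \<notin> P" "{0,1,2,4,5} \<inter> P \<noteq> {2}"
  shows "exceeds_T1_33 ({0,1,2,4,5} \<inter> P) (\<lambda>v. Suc (b v))"
  using assms unfolding exceeds_T1_33_def matching_count_list matching_size_sum_list
  by (cases "0 \<in> P"; cases "1 \<in> P"; cases "4 \<in> P"; cases "5 \<in> P";
      simp only: Int_insert_left if_True if_False Int_empty_left; code_simp; simp add: algebra_simps)

lemma exceeds_T1_33:
  assumes "2 \<in> P" "P \<subseteq> {0,1,2,4,5}" "P \<noteq> {2}" "\<forall>v\<in>P. 0 < a v"
  shows "exceeds_T1_33 P a"
proof (cases "0 \<in> P \<and> 1 \<in> P")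
  case True
  have "3 \<le> card m + card (P - \<Union>m)" if "admissible P m" for m
    by (rule admissible_size_ge_3) (use True assms(1,2) that in auto)
  moreover have "0 < matching_count P a" by (rule matching_count_pos) (use assms(2) in auto)
  ultimately show ?thesis by (rule exceeds_T1_33_if_sizes_ge_3)
next
  case False
  define b where "b v = a v - 1" for v
  have "{0,1,2,4,5} \<inter> P = P" using assms(2) by blast
  moreover have "exceeds_T1_33 ({0,1,2,4,5} \<inter> P) (\<lambda>v. Suc (b v))"
    by (rule exceeds_T1_33_eleven_cases) (use assms False in auto)
  ultimately have "exceeds_T1_33 P (\<lambda>v. Suc (b v))" by simp
  moreover have "exceeds_T1_33 P (\<lambda>v. Suc (b v)) \<longleftrightarrow> exceeds_T1_33 P a"
    by (rule exceeds_T1_33_cong) (use assms(4) in \<open>simp add: b_def\<close>)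
  ultimately show ?thesis by simp
qed

lemma avm_gt_avm_T1_33:
  assumes "7 \<le> n" and attached: "p ` {6..<n} \<subseteq> {0..5}"
    and "exceeds_T1_33 (p ` {6..<n}) (\<lambda>v. card (leaves n p v))"
  shows "avm (pendant_graph n p) > avm (T1_33 n)"
proof -
  let ?N = "matching_count (p ` {6..<n}) (\<lambda>v. card (leaves n p v))"
  let ?S = "matching_size_sum (p ` {6..<n}) (\<lambda>v. card (leaves n p v))"
  have "(9 * (n - 6) + 15) * ?N < ?S * (3 * (n - 6) + 7)"
    using assms(3) unfolding exceeds_T1_33_def sum_card_leaves .
  then have "real (9 * (n - 6) + 15) * real ?N < real ?S * real (3 * (n - 6) + 7)"
    by (metis of_nat_less_iff of_nat_mult)
  moreover have "0 < ?N" by (rule matching_count_pos[OF attached])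
  ultimately show ?thesis
    unfolding avm_pendant_graph[OF attached] avm_T1_33[OF assms(1)] by (simp add: field_simps)
qed

theorem lemma4p4:
  fixes n :: nat and p :: "nat \<Rightarrow> nat"
  assumes "n \<ge> 7"
    and "\<forall>i. 6 \<le> i \<and> i < n \<longrightarrow> p i \<in> {0,1,2,3,4,5}"
    and "\<exists>i. 6 \<le> i \<and> i < n \<and> p i = 2"
    and "\<forall>i. 6 \<le> i \<and> i < n \<longrightarrow> p i \<noteq> 3"
    and "\<exists>i. 6 \<le> i \<and> i < n \<and> p i \<in> {0,1,4,5}"
  shows "avm (pendant_graph n p) > avm (T1_33 n)"
proof (rule avm_gt_avm_T1_33[OF assms(1)])
  show "p ` {6..<n} \<subseteq> {0..5}" using assms(2) by auto
  show "exceeds_T1_33 (p ` {6..<n}) (\<lambda>v. card (leaves n p v))"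
  proof (rule exceeds_T1_33)
    show "2 \<in> p ` {6..<n}" using assms(3) by force
    show "p ` {6..<n} \<subseteq> {0,1,2,4,5}" using assms(2,4) by force
    obtain i where "i \<in> {6..<n}" "p i \<in> {0,1,4,5}" using assms(5) by auto
    then have "p i \<in> p ` {6..<n}" "p i \<noteq> 2" by auto
    then show "p ` {6..<n} \<noteq> {2}" by (metis singletonD)
    show "\<forall>v\<in>p ` {6..<n}. 0 < card (leaves n p v)"
      unfolding leaves_def by (auto simp: card_gt_0_iff)
  qed
qed

end
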